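(* Let $(X,\delta,c)$ be an accepting automaton over $\Sigma$ such that the smallest Boolean subalgebra of $P(X)$ containing $\langle c\rangle$ is $P(X)$ itself. Then $\mathsf{cofree}(X,\delta)$ can be entirely embedded in $\mu\mathrm{PL}(\delta,c)$: every language belonging to $\mathsf{cofree}(X,\delta)$ is the language $L(\mathcal{U})$ of some state $\mathcal{U}$ of $\mu\mathrm{PL}(\delta,c)$.
   Context: $\Sigma$ is a finite alphabet, $\Sigma^\ast$ the free monoid with empty word $\epsilon$, $u^r$ the reversal of $u$. An accepting automaton is $(X,\delta,c)$ with $\delta:X\to X^\Sigma$ (extended to words by $\delta(x)(\epsilon)=x$, $\delta(x)(wa)=\delta(\delta(x)(w))(a)$) and $c\subseteq X$; for $x\in X$, $U\subseteq X$, $L(x,U)=\{u\mid\delta(x)(u)\in U\}$. $\mathsf{cofree}(X,\delta)$ is the smallest set of coequations satisfied by $(X,\delta)$: the least subautomaton of the final automaton of languages ($2^{\Sigma^\ast}$ with derivative transitions $V\mapsto\{w\mid aw\in V\}$ and final states $\{V\mid\epsilon\in V\}$) containing all languages $L(x,U)$ with $x\in X$, $U\subseteq X$. Define $\widehat{\delta}(U)(a)=\{x\mid\delta(x)(a)\in U\}$ for $U\subseteq X$, extended to words, so $\widehat{\delta}(U)(w)=\{x\mid\delta(x)(w^r)\in U\}$. Let $\langle c\rangle=\{\widehat{\delta}(c)(w)\mid w\in\Sigma^\ast\}$ and $u\approx v$ iff $\widehat{\delta}(U)(u)=\widehat{\delta}(U)(v)$ for all $U\in\langle c\rangle$. $\mu\mathrm{PL}(\delta,c)$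 has state space $P(\Sigma^\ast/{\approx})$, transition $\widehat{\sigma}(\mathcal{U})(u)=\{[w]\mid[wu^r]\in\mathcal{U}\}$ and final states $\{\mathcal{U}\mid[\epsilon]\in\mathcal{U}\}$; $L(\mathcal{U})=\{u\mid[\epsilon]\in\widehat{\sigma}(\mathcal{U})(u)\}$. *)

theory Defs
  imports Main
begin

definition dstar :: "('s \<Rightarrow> 'a \<Rightarrow> 's) \<Rightarrow> 's \<Rightarrow> 'a list \<Rightarrow> 's" where
  "dstar delta x w = foldl delta x w"

definition Lang :: "('s \<Rightarrow> 'a \<Rightarrow> 's) \<Rightarrow> 's \<Rightarrow> 's set \<Rightarrow> 'a list set" where
  "Lang delta x U = {u. dstar delta x u \<in> U}"

definition lderiv :: "'a \<Rightarrow> 'a list set \<Rightarrow> 'a list set" where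
  "lderiv a V = {w. a # w \<in> V}"

text \<open>cofree(X,delta): the least subautomaton of the final automaton of languages
  containing all L(x,U).\<close>
inductive_set cofree :: "('s \<Rightarrow> 'a \<Rightarrow> 's) \<Rightarrow> 'a list set set"
  for delta :: "'s \<Rightarrow> 'a \<Rightarrow> 's" where
  gen: "Lang delta x U \<in> cofree delta"
| der: "V \<in> cofree delta \<Longrightarrow> lderiv a V \<in> cofree delta"

definition hatd :: "('s \<Rightarrow> 'a \<Rightarrow> 's) \<Rightarrow> 's set \<Rightarrow> 'a list \<Rightarrow> 's set" where
  "hatd delta U w = {x. dstar delta x (rev w) \<in> U}"

definition gen_c :: "('s \<Rightarrow> 'a \<Rightarrow> 's) \<Rightarrow> 's set \<Rightarrow> 's set set" where
  "gen_c delta c = {hatd delta c w | w. True}"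

inductive_set bool_closure :: "'s set set \<Rightarrow> 's set set" for G :: "'s set set" where
  base: "U \<in> G \<Longrightarrow> U \<in> bool_closure G"
| empty: "{} \<in> bool_closure G"
| compl: "U \<in> bool_closure G \<Longrightarrow> - U \<in> bool_closure G"
| union: "U \<in> bool_closure G \<Longrightarrow> V \<in> bool_closure G \<Longrightarrow> U \<union> V \<in> bool_closure G"

definition approx :: "('s \<Rightarrow> 'a \<Rightarrow> 's) \<Rightarrow> 's set \<Rightarrow> 'a list \<Rightarrow> 'a list \<Rightarrow> bool" where
  "approx delta c u v \<longleftrightarrow> (\<forall>U \<in> gen_c delta c. hatd delta U u = hatd delta U v)"

definition cls :: "('s \<Rightarrow> 'a \<Rightarrow> 's) \<Rightarrow> 's set \<Rightarrow> 'a list \<Rightarrow> 'a list set" where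
  "cls delta c w = {v. approx delta c w v}"

definition classes :: "('s \<Rightarrow> 'a \<Rightarrow> 's) \<Rightarrow> 's set \<Rightarrow> 'a list set set" where
  "classes delta c = range (cls delta c)"

text \<open>States of muPL(delta,c) are subsets of classes delta c.
  hat sigma(\<U>)(u) = {[w] | [w u^r] \<in> \<U>}\<close>
definition hsig :: "('s \<Rightarrow> 'a \<Rightarrow> 's) \<Rightarrow> 's set \<Rightarrow> 'a list set set \<Rightarrow> 'a list \<Rightarrow> 'a list set set" where
  "hsig delta c \<U> u = {cls delta c w | w. cls delta c (w @ rev u) \<in> \<U>}"

definition PL_lang :: "('s \<Rightarrow> 'a \<Rightarrow> 's) \<Rightarrow> 's set \<Rightarrow> 'a list set set \<Rightarrow> 'a list set" where
  "PL_lang delta c \<U> = {u. cls delta c [] \<in> hsig delta c \<U> u}"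

end

theory Submission
  imports Defs
begin

text \<open>When the Boolean closure of \<open>\<langle>c\<rangle>\<close> is all of \<open>P(X)\<close> it contains every singleton, so
  \<open>u \<approx> v\<close> holds exactly when \<open>u\<^sup>r\<close> and \<open>v\<^sup>r\<close> act on \<open>X\<close> as the same transformation.
  Every language of \<open>cofree(X,\<delta>)\<close> is saturated by this transition congruence, because the
  generators \<open>L(x,U)\<close> are and derivatives preserve it. Hence such a language \<open>L\<close> is the
  language of the state \<open>{[u\<^sup>r] | u \<in> L}\<close> of \<open>\<mu>PL(\<delta>,c)\<close>.\<close>

lemma dstar_append: "dstar d x (u @ v) = dstar d (dstar d x u) v"
  by (simp add: dstar_def)

lemma dstar_Cons: "dstar d x (a # u) = dstar d (d x a) u"
  by (simp add: dstar_def)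

lemma bool_closure_preimage_eq:
  assumes "U \<in> bool_closure G"
    and "\<And>V. V \<in> G \<Longrightarrow> {x. f x \<in> V} = {x. g x \<in> V}"
  shows "{x. f x \<in> U} = {x. g x \<in> U}"
  using assms(1) by induction (use assms(2) in blast)+

lemma cls_eq_iff_approx: "cls d c u = cls d c v \<longleftrightarrow> approx d c u v"
proof
  assume "cls d c u = cls d c v"
  then have "v \<in> cls d c u"
    by (simp add: cls_def approx_def)
  then show "approx d c u v"
    by (simp add: cls_def)
qed (auto simp: cls_def approx_def)

lemma approx_iff_dstar_rev_eq:
  assumes "bool_closure (gen_c d c) = UNIV"
  shows "approx d c u v \<longleftrightarrow> (\<forall>x. dstar d x (rev u) = dstar d x (rev v))"
proof
  assume "approx d c u v"
  have preimage_eq: "{y. dstar d y (rev u) \<in> U} = {y. dstar d y (rev v) \<in> U}"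
    if "U \<in> bool_closure (gen_c d c)" for U
    using that
  proof (rule bool_closure_preimage_eq)
    fix V assume "V \<in> gen_c d c"
    with \<open>approx d c u v\<close> have "hatd d V u = hatd d V v"
      unfolding approx_def by blast
    then show "{y. dstar d y (rev u) \<in> V} = {y. dstar d y (rev v) \<in> V}"
      unfolding hatd_def .
  qed
  show "\<forall>x. dstar d x (rev u) = dstar d x (rev v)"
  proof
    fix x
    have "{dstar d x (rev u)} \<in> bool_closure (gen_c d c)"
      using assms by simp
    from eqset_imp_iff[OF preimage_eq[OF this], of x]
    show "dstar d x (rev u) = dstar d x (rev v)"
      by simp
  qed
qed (simp add: approx_def hatd_def)

lemma cofree_dstar_saturated:
  assumes "L \<in> cofree d" and "\<And>x. dstar d x u = dstar d x v"
  shows "u \<in> L \<longleftrightarrow> v \<in> L"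
  using assms
proof (induction arbitrary: u v)
  case (gen x U)
  then show ?case
    unfolding Lang_def by simp
next
  case (der V a)
  have "dstar d x (a # u) = dstar d x (a # v)" for x
    unfolding dstar_Cons by (rule der.prems)
  then have "a # u \<in> V \<longleftrightarrow> a # v \<in> V"
    by (rule der.IH)
  then show ?case
    unfolding lderiv_def by simp
qed

lemma PL_lang_cls_rev:
  assumes closure: "bool_closure (gen_c d c) = UNIV"
    and saturated: "\<And>u v. (\<And>x. dstar d x u = dstar d x v) \<Longrightarrow> u \<in> L \<longleftrightarrow> v \<in> L"
  shows "PL_lang d c {cls d c (rev u) | u. u \<in> L} = L"
proof
  show "L \<subseteq> PL_lang d c {cls d c (rev u) | u. u \<in> L}"
    unfolding PL_lang_def hsig_def by fastforce
next
  show "PL_lang d c {cls d c (rev u) | u. u \<in> L} \<subseteq> L"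
  proof
    fix u assume "u \<in> PL_lang d c {cls d c (rev u) | u. u \<in> L}"
    then obtain w u' where "cls d c [] = cls d c w" "cls d c (w @ rev u) = cls d c (rev u')"
      and "u' \<in> L"
      unfolding PL_lang_def hsig_def by blast
    then have "\<forall>x. dstar d x (rev w) = dstar d x []"
      and "\<forall>x. dstar d x (rev (w @ rev u)) = dstar d x u'"
      by (simp_all add: cls_eq_iff_approx approx_iff_dstar_rev_eq[OF closure])
    then have "dstar d x u = dstar d x u'" for x
      by (simp add: dstar_append) (simp add: dstar_def)
    then have "u \<in> L \<longleftrightarrow> u' \<in> L"
      by (rule saturated)
    with \<open>u' \<in> L\<close> show "u \<in> L"
      by simp
  qed
qed

theorem mainTheorem9:
  fixes delta :: "'s \<Rightarrow> 'a::finite \<Rightarrow> 's" and c :: "'s set"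
  assumes "bool_closure (gen_c delta c) = UNIV"
  shows "\<forall>L \<in> cofree delta. \<exists>\<U>. \<U> \<subseteq> classes delta c \<and> L = PL_lang delta c \<U>"
proof
  fix L assume "L \<in> cofree delta"
  then have "L = PL_lang delta c {cls delta c (rev u) | u. u \<in> L}"
    by (intro PL_lang_cls_rev[OF assms, symmetric] cofree_dstar_saturated)
  moreover have "{cls delta c (rev u) | u. u \<in> L} \<subseteq> classes delta c"
    by (auto simp: classes_def)
  ultimately show "\<exists>\<U>. \<U> \<subseteq> classes delta c \<and> L = PL_lang delta c \<U>"
    by blast
qed

end
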